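(* Let $\beta\ge 1$ and let $R=(S^0,\dots,S^T)$ be a $\beta$-bounded $T$-covering in a congestion game in which every delay function is $f(x)=x$, and assume $\mathrm{OPT}>0$. Then $$\frac{\sum_{e\in E}n_e(S^T)\,n_e(S^* )}{\mathrm{OPT}}\le\sqrt{2\,\frac{\rho(R)}{\mathrm{OPT}}}.$$
   Context: A congestion game has players $N=\{1,\dots,n\}$, a finite resource set $E$ and strategy sets $\Sigma_i\subseteq 2^E$. For a profile $S=(s_1,\dots,s_n)$, $n_e(S)=|\{i: e\in s_i\}|$. Here all delays are $f(x)=x$, so the cost of player $i$ is $c_i(S)=\sum_{e\in s_i}n_e(S)$ and the social cost is $C(S)=\sum_i c_i(S)=\sum_{e\in E}n_e(S)^2$. Fix an optimal profile $S^*=(s_1^*,\dots,s_n^* )$ minimizing $C$ and write $\mathrm{OPT}=C(S^* )$. A best response of player $i$ in $S$ is a strategy $s_i^b\in\Sigma_i$ minimizing $c_i(S_{-i},\cdot)$ over $\Sigma_i$ (where $(S_{-i},s_i')$ replaces $s_i$ by $s_i'$); if no strategy strictly decreases $i$'s cost, the best response is $s_i$ itself. A $T$-covering is a sequence of profiles $R=(S^0,\dots,S^T)$ together with players $\pi(1),\dots,\pi(T)$ such that for each $1\le t\le T$, $S^t=(S^{t-1}_{-\pi(t)},s')$ where $s'$ is a best response of $\pi(t)$ in $S^{t-1}$, and every player of $N$ occurs at least once among $\pi(1),\dots,\pi(T)$. It is $\beta$-bounded if every player occurs at most $\beta$ times among $\pi(1),\dots,\pi(T)$. For each player $i$, $\mathrm{last}(i)=\max\{t:\pi(t)=i\}$.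 Define $\rho(R)=\sum_{i=1}^n\sum_{e\in s_i^*}\bigl(n_e(S^{\mathrm{last}(i)-1})+1\bigr)$. *)

theory Defs
  imports Complex_Main
begin

text \<open>Congestion game with players N, resources E, strategy sets Sig i \<subseteq> Pow E,
  all delays f(x) = x. A profile is a function from players to strategies.\<close>

definition load :: "'p set \<Rightarrow> ('p \<Rightarrow> 'e set) \<Rightarrow> 'e \<Rightarrow> nat" where
  "load N S e = card {i \<in> N. e \<in> S i}"

definition pcost :: "'p set \<Rightarrow> ('p \<Rightarrow> 'e set) \<Rightarrow> 'p \<Rightarrow> nat" where
  "pcost N S i = (\<Sum>e\<in>S i. load N S e)"

definition social_cost :: "'p set \<Rightarrow> ('p \<Rightarrow> 'e set) \<Rightarrow> nat" where
  "social_cost N S = (\<Sum>i\<in>N. pcost N S i)"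

definition congestion_game :: "'p set \<Rightarrow> 'e set \<Rightarrow> ('p \<Rightarrow> 'e set set) \<Rightarrow> bool" where
  "congestion_game N E Sig \<longleftrightarrow> finite N \<and> finite E \<and> (\<forall>i\<in>N. Sig i \<subseteq> Pow E \<and> Sig i \<noteq> {})"

definition valid_profile :: "'p set \<Rightarrow> ('p \<Rightarrow> 'e set set) \<Rightarrow> ('p \<Rightarrow> 'e set) \<Rightarrow> bool" where
  "valid_profile N Sig S \<longleftrightarrow> (\<forall>i\<in>N. S i \<in> Sig i)"

definition optimal_profile :: "'p set \<Rightarrow> ('p \<Rightarrow> 'e set set) \<Rightarrow> ('p \<Rightarrow> 'e set) \<Rightarrow> bool" where
  "optimal_profile N Sig S \<longleftrightarrow> valid_profile N Sig S \<and>
     (\<forall>S'. valid_profile N Sig S' \<longrightarrow> social_cost N S \<le> social_cost N S')"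

definition best_response :: "'p set \<Rightarrow> ('p \<Rightarrow> 'e set set) \<Rightarrow> ('p \<Rightarrow> 'e set) \<Rightarrow> 'p \<Rightarrow> 'e set \<Rightarrow> bool" where
  "best_response N Sig S i s' \<longleftrightarrow> s' \<in> Sig i \<and>
     (\<forall>s\<in>Sig i. pcost N (S(i := s')) i \<le> pcost N (S(i := s)) i) \<and>
     ((\<forall>s\<in>Sig i. pcost N S i \<le> pcost N (S(i := s)) i) \<longrightarrow> s' = S i)"

definition covering :: "'p set \<Rightarrow> ('p \<Rightarrow> 'e set set) \<Rightarrow> nat \<Rightarrow> (nat \<Rightarrow> 'p \<Rightarrow> 'e set) \<Rightarrow> (nat \<Rightarrow> 'p) \<Rightarrow> bool" where
  "covering N Sig T Ss ply \<longleftrightarrow> valid_profile N Sig (Ss 0) \<and>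
     (\<forall>t\<in>{1..T}. ply t \<in> N \<and>
        (\<exists>s'. best_response N Sig (Ss (t - 1)) (ply t) s' \<and> Ss t = (Ss (t - 1))(ply t := s'))) \<and>
     (\<forall>i\<in>N. \<exists>t\<in>{1..T}. ply t = i)"

definition bounded_covering :: "'p set \<Rightarrow> nat \<Rightarrow> (nat \<Rightarrow> 'p) \<Rightarrow> real \<Rightarrow> bool" where
  "bounded_covering N T ply \<beta> \<longleftrightarrow> (\<forall>i\<in>N. real (card {t\<in>{1..T}. ply t = i}) \<le> \<beta>)"

definition last_move :: "nat \<Rightarrow> (nat \<Rightarrow> 'p) \<Rightarrow> 'p \<Rightarrow> nat" where
  "last_move T ply i = Max {t\<in>{1..T}. ply t = i}"

definition rho :: "'p set \<Rightarrow> nat \<Rightarrow> (nat \<Rightarrow> 'p \<Rightarrow> 'e set) \<Rightarrow> (nat \<Rightarrow> 'p) \<Rightarrow> ('p \<Rightarrow> 'e set) \<Rightarrow> nat" where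
  "rho N T Ss ply Sstar = (\<Sum>i\<in>N. \<Sum>e\<in>Sstar i. load N (Ss (last_move T ply i - 1)) e + 1)"

end

theory Submission
  imports Defs "HOL-Analysis.Analysis"
begin

(* Let F = S^T be the final profile and order the players by their last
   move last(i).  When player i moves for the last time, every player j with
   last(j) <= last(i) already plays F j; hence on each resource e of F i the number of
   such players is at most the load at that moment, which by the best-response property
   is bounded by the cost i would pay for deviating to the optimal strategy s_i^opt, i.e. by
   sum_{e in s_i^opt} (n_e(S^{last(i)-1}) + 1).  Summing over i and double counting gives
   sum_e sum_{i uses e} #{j uses e, last(j) <= last(i)} <= rho(R), and since every
   ordered pair (i,j) is counted at least once in one of its two orders, C(F) <= 2 rho(R).
   The theorem then follows from Cauchy-Schwarz:
   (sum_e n_e(F) n_e(S^opt))^2 <= C(F) * OPT <= 2 rho(R) * OPT. *)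

lemma load_fun_upd_le:
  assumes "finite N"
  shows "load N (S(i := s)) e \<le> load N S e + 1"
proof -
  have "{j \<in> N. e \<in> (S(i := s)) j} \<subseteq> insert i {j \<in> N. e \<in> S j}" by auto
  hence "card {j \<in> N. e \<in> (S(i := s)) j} \<le> card (insert i {j \<in> N. e \<in> S j})"
    by (intro card_mono) (use assms in auto)
  also have "\<dots> \<le> card {j \<in> N. e \<in> S j} + 1" by (simp add: card_insert_le_m1 card_insert_if)
  finally show ?thesis unfolding load_def by simp
qed

lemma sum_players_resources_swap:
  fixes f :: "'p \<Rightarrow> 'e \<Rightarrow> nat"
  assumes "finite N" "finite E" "\<forall>i\<in>N. S i \<subseteq> E"
  shows "(\<Sum>i\<in>N. \<Sum>e\<in>S i. f i e) = (\<Sum>e\<in>E. \<Sum>i\<in>{i\<in>N. e \<in> S i}. f i e)"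
proof -
  have "(\<Sum>i\<in>N. \<Sum>e\<in>S i. f i e) = (\<Sum>i\<in>N. \<Sum>e\<in>{e. e \<in> E \<and> e \<in> S i}. f i e)"
    by (rule sum.cong) (use assms(3) in \<open>auto intro!: sum.cong\<close>)
  also have "\<dots> = (\<Sum>e\<in>E. \<Sum>i\<in>{i. i \<in> N \<and> e \<in> S i}. f i e)"
    by (rule sum.swap_restrict) (use assms in auto)
  finally show ?thesis by simp
qed

lemma social_cost_sum_squares:
  assumes "finite N" "finite E" "\<forall>i\<in>N. S i \<subseteq> E"
  shows "social_cost N S = (\<Sum>e\<in>E. load N S e * load N S e)"
proof -
  have "social_cost N S = (\<Sum>e\<in>E. \<Sum>i\<in>{i\<in>N. e \<in> S i}. load N S e)"
    unfolding social_cost_def pcost_def by (rule sum_players_resources_swap[OF assms])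
  thus ?thesis by (simp add: load_def)
qed

text \<open>For any ranking g of a finite set A, every ordered pair is counted in at least
  one of its two orders, so |A|^2 is at most twice the number of pairs (i,j) with
  g j \<le> g i.\<close>
lemma card_square_le_ranked_pairs:
  fixes g :: "'a \<Rightarrow> 'b::linorder"
  assumes "finite A"
  shows "card A * card A \<le> 2 * (\<Sum>i\<in>A. card {j\<in>A. g j \<le> g i})"
proof -
  have count: "\<And>P. card {j\<in>A. P j} = (\<Sum>j\<in>A. if P j then 1 else (0::nat))"
    using assms by (simp add: sum.If_cases Int_def conj_commute)
  have "(\<Sum>i\<in>A. card {j\<in>A. g j \<le> g i}) = (\<Sum>i\<in>A. \<Sum>j\<in>A. if g i \<le> g j then 1 else (0::nat))"
    by (simp add: count) (rule sum.swap)
  hence "2 * (\<Sum>i\<in>A. card {j\<in>A. g j \<le> g i}) =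
      (\<Sum>i\<in>A. \<Sum>j\<in>A. (if g j \<le> g i then 1 else 0) + (if g i \<le> g j then 1 else (0::nat)))"
    by (simp add: count sum.distrib)
  also have "\<dots> \<ge> (\<Sum>i\<in>A. \<Sum>j\<in>A. (1::nat))"
    by (intro sum_mono) auto
  finally show ?thesis by simp
qed

lemma covering_strategy_unchanged:
  assumes cov: "covering N Sig T Ss ply"
  shows "t \<le> t' \<Longrightarrow> t' \<le> T \<Longrightarrow> \<forall>s\<in>{t<..t'}. ply s \<noteq> j \<Longrightarrow> Ss t' j = Ss t j"
proof (induction t')
  case 0
  thus ?case by simp
next
  case (Suc t')
  show ?case
  proof (cases "t = Suc t'")
    case False
    hence t_le: "t \<le> t'" using Suc by simp
    have "Suc t' \<in> {1..T}" using Suc by simp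
    then obtain s' where "Ss (Suc t') = (Ss t')(ply (Suc t') := s')"
      using cov unfolding covering_def by fastforce
    moreover have "ply (Suc t') \<noteq> j" using Suc.prems t_le by auto
    ultimately show ?thesis using Suc t_le by auto
  qed simp
qed

lemma last_move_props:
  assumes cov: "covering N Sig T Ss ply" and i: "i \<in> N"
  shows "last_move T ply i \<in> {1..T}" "ply (last_move T ply i) = i"
    and "\<forall>s\<in>{last_move T ply i<..T}. ply s \<noteq> i"
proof -
  let ?M = "{t\<in>{1..T}. ply t = i}"
  have "?M \<noteq> {}" using cov i unfolding covering_def by blast
  hence "last_move T ply i \<in> ?M" unfolding last_move_def by (intro Max_in) auto
  thus "last_move T ply i \<in> {1..T}" "ply (last_move T ply i) = i" by auto
  show "\<forall>s\<in>{last_move T ply i<..T}. ply s \<noteq> i"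
  proof (intro ballI notI)
    fix s assume s: "s \<in> {last_move T ply i<..T}" and "ply s = i"
    hence "s \<le> last_move T ply i" unfolding last_move_def by (intro Max_ge) auto
    with s show False by simp
  qed
qed

lemma last_move_best_response:
  assumes cov: "covering N Sig T Ss ply" and i: "i \<in> N"
  obtains s' where "best_response N Sig (Ss (last_move T ply i - 1)) i s'"
    and "Ss (last_move T ply i) = (Ss (last_move T ply i - 1))(i := s')"
  using cov last_move_props[OF cov i] unfolding covering_def by metis

lemma final_strategy_eq_last_move:
  assumes cov: "covering N Sig T Ss ply" and i: "i \<in> N"
  shows "Ss T i = Ss (last_move T ply i) i"
  using covering_strategy_unchanged[OF cov, of "last_move T ply i" T i] last_move_props[OF cov i]
  by auto

lemma earlier_players_final:
  assumes cov: "covering N Sig T Ss ply" and "i \<in> N" "j \<in> N"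
    and "last_move T ply j \<le> last_move T ply i"
  shows "Ss (last_move T ply i) j = Ss T j"
  using covering_strategy_unchanged[OF cov, of "last_move T ply j" "last_move T ply i" j]
    last_move_props[OF cov assms(2)] last_move_props[OF cov assms(3)] assms(4)
    final_strategy_eq_last_move[OF cov assms(3)]
  by auto

lemma final_strategy_valid:
  assumes cov: "covering N Sig T Ss ply" and i: "i \<in> N"
  shows "Ss T i \<in> Sig i"
proof -
  obtain s' where "best_response N Sig (Ss (last_move T ply i - 1)) i s'"
    and "Ss (last_move T ply i) = (Ss (last_move T ply i - 1))(i := s')"
    using last_move_best_response[OF cov i] .
  thus ?thesis
    using final_strategy_eq_last_move[OF cov i] unfolding best_response_def by simp
qed

text \<open>Per-player bound: on the final strategy of i, count the players j using the same
  resource whose last move is not later than that of i; this is at most the cost of i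
  right after its last move, hence (best response) at most its cost of deviating to
  its optimal strategy.\<close>
lemma player_earlier_load_le:
  assumes "finite N" and cov: "covering N Sig T Ss ply"
    and i: "i \<in> N" and star: "Sstar i \<in> Sig i"
  shows "(\<Sum>e\<in>Ss T i. card {j\<in>N. e \<in> Ss T j \<and> last_move T ply j \<le> last_move T ply i})
      \<le> (\<Sum>e\<in>Sstar i. load N (Ss (last_move T ply i - 1)) e + 1)"
proof -
  define t where "t = last_move T ply i"
  obtain s' where br: "best_response N Sig (Ss (t - 1)) i s'" and step: "Ss t = (Ss (t - 1))(i := s')"
    using last_move_best_response[OF cov i] unfolding t_def .
  have "(\<Sum>e\<in>Ss T i. card {j\<in>N. e \<in> Ss T j \<and> last_move T ply j \<le> t}) \<le> (\<Sum>e\<in>Ss T i. load N (Ss t) e)"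
  proof (rule sum_mono)
    fix e
    have "{j\<in>N. e \<in> Ss T j \<and> last_move T ply j \<le> t} \<subseteq> {j\<in>N. e \<in> Ss t j}"
      using earlier_players_final[OF cov i] unfolding t_def by auto
    thus "card {j\<in>N. e \<in> Ss T j \<and> last_move T ply j \<le> t} \<le> load N (Ss t) e"
      unfolding load_def using \<open>finite N\<close> by (intro card_mono) auto
  qed
  also have "\<dots> = pcost N (Ss t) i"
    unfolding pcost_def final_strategy_eq_last_move[OF cov i] t_def ..
  also have "\<dots> \<le> pcost N ((Ss (t - 1))(i := Sstar i)) i"
    using br star unfolding step best_response_def by auto
  also have "\<dots> \<le> (\<Sum>e\<in>Sstar i. load N (Ss (t - 1)) e + 1)"
    unfolding pcost_def fun_upd_same by (intro sum_mono load_fun_upd_le[OF \<open>finite N\<close>])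
  finally show ?thesis unfolding t_def .
qed

theorem final_social_cost_le_rho:
  assumes game: "congestion_game N E Sig" and star: "valid_profile N Sig Sstar"
    and cov: "covering N Sig T Ss ply"
  shows "social_cost N (Ss T) \<le> 2 * rho N T Ss ply Sstar"
proof -
  define F where "F = Ss T"
  define lt where "lt = last_move T ply"
  have fN: "finite N" and fE: "finite E" using game unfolding congestion_game_def by auto
  have FE: "\<forall>i\<in>N. F i \<subseteq> E"
    using game final_strategy_valid[OF cov] unfolding F_def congestion_game_def by blast
  have "social_cost N F = (\<Sum>e\<in>E. card {i\<in>N. e \<in> F i} * card {i\<in>N. e \<in> F i})"
    unfolding social_cost_sum_squares[OF fN fE FE] load_def ..
  also have "\<dots> \<le> (\<Sum>e\<in>E. 2 * (\<Sum>i\<in>{i\<in>N. e \<in> F i}. card {j\<in>{i\<in>N. e \<in> F i}. lt j \<le> lt i}))"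
    by (intro sum_mono card_square_le_ranked_pairs) (use fN in auto)
  also have "\<dots> = 2 * (\<Sum>e\<in>E. \<Sum>i\<in>{i\<in>N. e \<in> F i}. card {j\<in>N. e \<in> F j \<and> lt j \<le> lt i})"
    by (simp add: sum_distrib_left conj_commute conj_left_commute)
  also have "(\<Sum>e\<in>E. \<Sum>i\<in>{i\<in>N. e \<in> F i}. card {j\<in>N. e \<in> F j \<and> lt j \<le> lt i})
      = (\<Sum>i\<in>N. \<Sum>e\<in>F i. card {j\<in>N. e \<in> F j \<and> lt j \<le> lt i})"
    by (rule sum_players_resources_swap[OF fN fE FE, symmetric])
  also have "\<dots> \<le> rho N T Ss ply Sstar"
    unfolding rho_def F_def lt_def
    using star unfolding valid_profile_def by (intro sum_mono player_earlier_load_le[OF fN cov]) auto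
  finally show ?thesis unfolding F_def by simp
qed

lemma ratio_le_sqrt:
  fixes x C D R :: real
  assumes "x\<^sup>2 \<le> C * D" "D > 0" "C \<le> R"
  shows "x / D \<le> sqrt (R / D)"
proof (rule real_le_rsqrt)
  have "(x / D)\<^sup>2 = x\<^sup>2 / D\<^sup>2" by (simp add: power_divide)
  also have "\<dots> \<le> C * D / D\<^sup>2" using assms by (simp add: divide_right_mono)
  also have "\<dots> = C / D" using assms by (simp add: power2_eq_square)
  also have "\<dots> \<le> R / D" using assms by (simp add: divide_right_mono)
  finally show "(x / D)\<^sup>2 \<le> R / D" .
qed

theorem lemma2:
  fixes N :: "'p set" and E :: "'e set" and Sig :: "'p \<Rightarrow> 'e set set"
    and T :: nat and Ss :: "nat \<Rightarrow> 'p \<Rightarrow> 'e set" and ply :: "nat \<Rightarrow> 'p"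
    and Sstar :: "'p \<Rightarrow> 'e set" and \<beta> :: real
  assumes "congestion_game N E Sig"
    and "optimal_profile N Sig Sstar"
    and "\<beta> \<ge> 1"
    and "covering N Sig T Ss ply"
    and "bounded_covering N T ply \<beta>"
    and "social_cost N Sstar > 0"
  shows "(\<Sum>e\<in>E. real (load N (Ss T) e * load N Sstar e)) / real (social_cost N Sstar)
           \<le> sqrt (2 * real (rho N T Ss ply Sstar) / real (social_cost N Sstar))"
proof (rule ratio_le_sqrt)
  have fN: "finite N" and fE: "finite E" and game_E: "\<forall>i\<in>N. Sig i \<subseteq> Pow E"
    using assms(1) unfolding congestion_game_def by auto
  have star: "valid_profile N Sig Sstar" using assms(2) unfolding optimal_profile_def by simp
  have "\<forall>i\<in>N. Ss T i \<subseteq> E" "\<forall>i\<in>N. Sstar i \<subseteq> E"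
    using game_E final_strategy_valid[OF assms(4)] star unfolding valid_profile_def by blast+
  note cost_eq = this[THEN social_cost_sum_squares[OF fN fE]]
  show "(\<Sum>e\<in>E. real (load N (Ss T) e * load N Sstar e))\<^sup>2
      \<le> real (social_cost N (Ss T)) * real (social_cost N Sstar)"
    using Cauchy_Schwarz_ineq_sum[of "\<lambda>e. real (load N (Ss T) e)" "\<lambda>e. real (load N Sstar e)" E]
    unfolding cost_eq by (simp add: power2_eq_square)
  show "real (social_cost N (Ss T)) \<le> 2 * real (rho N T Ss ply Sstar)"
    using final_social_cost_le_rho[OF assms(1) star assms(4)] by linarith
  show "real (social_cost N Sstar) > 0" using assms(6) by simp
qed

end
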